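(* Let $B$ be a ring and $S\subseteq S_0(B)$ a multiplicative subset of $B$ such that $S^{-1}B$ exists. If every left regular element of $S^{-1}B$ is regular, then every left regular element of $B$ is regular. The right-side version also holds: if $BS^{-1}$ exists and every right regular element of $BS^{-1}$ is regular, then every right regular element of $B$ is regular.
   Context: Rings are associative with identity. $S_0(B)$ is the set of regular elements (non-zero-divisors on both sides) of $B$. An element $x$ of a ring is left regular if $rx=0$ implies $r=0$, and right regular if $xr=0$ implies $r=0$. A multiplicative subset $S$ satisfies $1\in S$, $0\notin S$, and is closed under products. $S^{-1}B$ (respectively $BS^{-1}$) denotes the left (respectively right) ring of fractions of $B$ with respect to $S$. For $S$ consisting of regular elements, $S^{-1}B$ exists iff the left Ore condition holds: for all $a\in B$, $s\in S$ there are $s'\in S$, $a'\in B$ with $s'a=a's$. The right case is symmetric. *)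

theory Defs
  imports "HOL-Algebra.Ring" "HOL-Algebra.RingHom"
begin

definition left_regular :: "('a, 'm) ring_scheme \<Rightarrow> 'a \<Rightarrow> bool" where
  "left_regular R x \<longleftrightarrow> x \<in> carrier R \<and>
     (\<forall>r \<in> carrier R. r \<otimes>\<^bsub>R\<^esub> x = \<zero>\<^bsub>R\<^esub> \<longrightarrow> r = \<zero>\<^bsub>R\<^esub>)"

definition right_regular :: "('a, 'm) ring_scheme \<Rightarrow> 'a \<Rightarrow> bool" where
  "right_regular R x \<longleftrightarrow> x \<in> carrier R \<and>
     (\<forall>r \<in> carrier R. x \<otimes>\<^bsub>R\<^esub> r = \<zero>\<^bsub>R\<^esub> \<longrightarrow> r = \<zero>\<^bsub>R\<^esub>)"

definition regular :: "('a, 'm) ring_scheme \<Rightarrow> 'a \<Rightarrow> bool" where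
  "regular R x \<longleftrightarrow> left_regular R x \<and> right_regular R x"

definition mult_subset :: "('a, 'm) ring_scheme \<Rightarrow> 'a set \<Rightarrow> bool" where
  "mult_subset R S \<longleftrightarrow> S \<subseteq> carrier R \<and> \<one>\<^bsub>R\<^esub> \<in> S \<and> \<zero>\<^bsub>R\<^esub> \<notin> S \<and>
     (\<forall>s \<in> S. \<forall>t \<in> S. s \<otimes>\<^bsub>R\<^esub> t \<in> S)"

definition left_ring_of_fractions ::
  "('a, 'm) ring_scheme \<Rightarrow> 'a set \<Rightarrow> ('b, 'n) ring_scheme \<Rightarrow> ('a \<Rightarrow> 'b) \<Rightarrow> bool" where
  "left_ring_of_fractions B S Q \<phi> \<longleftrightarrow> ring Q \<and> \<phi> \<in> ring_hom B Q \<and>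
     (\<forall>s \<in> S. \<phi> s \<in> Units Q) \<and>
     (\<forall>q \<in> carrier Q. \<exists>s \<in> S. \<exists>b \<in> carrier B. q = inv\<^bsub>Q\<^esub> (\<phi> s) \<otimes>\<^bsub>Q\<^esub> \<phi> b) \<and>
     (\<forall>b \<in> carrier B. \<phi> b = \<zero>\<^bsub>Q\<^esub> \<longleftrightarrow> (\<exists>s \<in> S. s \<otimes>\<^bsub>B\<^esub> b = \<zero>\<^bsub>B\<^esub>))"

definition right_ring_of_fractions ::
  "('a, 'm) ring_scheme \<Rightarrow> 'a set \<Rightarrow> ('b, 'n) ring_scheme \<Rightarrow> ('a \<Rightarrow> 'b) \<Rightarrow> bool" where
  "right_ring_of_fractions B S Q \<phi> \<longleftrightarrow> ring Q \<and> \<phi> \<in> ring_hom B Q \<and>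
     (\<forall>s \<in> S. \<phi> s \<in> Units Q) \<and>
     (\<forall>q \<in> carrier Q. \<exists>s \<in> S. \<exists>b \<in> carrier B. q = \<phi> b \<otimes>\<^bsub>Q\<^esub> inv\<^bsub>Q\<^esub> (\<phi> s)) \<and>
     (\<forall>b \<in> carrier B. \<phi> b = \<zero>\<^bsub>Q\<^esub> \<longleftrightarrow> (\<exists>s \<in> S. b \<otimes>\<^bsub>B\<^esub> s = \<zero>\<^bsub>B\<^esub>))"

end

theory Submission
  imports Defs
begin

text \<open>Since the elements of \<open>S\<close> are regular, the localisation map \<open>\<phi>\<close> is injective.
  Writing \<open>q = \<phi>(s)\<^sup>-\<^sup>1 \<phi>(b)\<close>, the equation \<open>q \<phi>(x) = 0\<close> becomes \<open>\<phi>(b x) = 0\<close>, so \<open>\<phi>\<close> carries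
  left regular elements of \<open>B\<close> to left regular elements of \<open>S\<^sup>-\<^sup>1B\<close>. These are regular by
  hypothesis, and an injective ring homomorphism reflects right regularity back to \<open>B\<close>.\<close>

lemma ring_hom_inj_reflects_right_regular:
  assumes "ring B" "ring Q" and hom: "\<phi> \<in> ring_hom B Q"
    and inj: "\<And>b. b \<in> carrier B \<Longrightarrow> \<phi> b = \<zero>\<^bsub>Q\<^esub> \<Longrightarrow> b = \<zero>\<^bsub>B\<^esub>"
    and x: "x \<in> carrier B" and reg: "right_regular Q (\<phi> x)"
  shows "right_regular B x"
  unfolding right_regular_def
proof (intro conjI ballI impI x)
  fix r assume r: "r \<in> carrier B" "x \<otimes>\<^bsub>B\<^esub> r = \<zero>\<^bsub>B\<^esub>"
  then have "\<phi> x \<otimes>\<^bsub>Q\<^esub> \<phi> r = \<zero>\<^bsub>Q\<^esub>"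
    using x hom ring_hom_zero[OF hom assms(1,2)] by (metis ring_hom_mult)
  then have "\<phi> r = \<zero>\<^bsub>Q\<^esub>"
    using reg r hom by (simp add: right_regular_def ring_hom_closed)
  then show "r = \<zero>\<^bsub>B\<^esub>" using inj r by blast
qed

lemma ring_hom_inj_reflects_left_regular:
  assumes "ring B" "ring Q" and hom: "\<phi> \<in> ring_hom B Q"
    and inj: "\<And>b. b \<in> carrier B \<Longrightarrow> \<phi> b = \<zero>\<^bsub>Q\<^esub> \<Longrightarrow> b = \<zero>\<^bsub>B\<^esub>"
    and x: "x \<in> carrier B" and reg: "left_regular Q (\<phi> x)"
  shows "left_regular B x"
  unfolding left_regular_def
proof (intro conjI ballI impI x)
  fix r assume r: "r \<in> carrier B" "r \<otimes>\<^bsub>B\<^esub> x = \<zero>\<^bsub>B\<^esub>"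
  then have "\<phi> r \<otimes>\<^bsub>Q\<^esub> \<phi> x = \<zero>\<^bsub>Q\<^esub>"
    using x hom ring_hom_zero[OF hom assms(1,2)] by (metis ring_hom_mult)
  then have "\<phi> r = \<zero>\<^bsub>Q\<^esub>"
    using reg r hom by (simp add: left_regular_def ring_hom_closed)
  then show "r = \<zero>\<^bsub>B\<^esub>" using inj r by blast
qed

lemma left_ring_of_fractions_inj:
  assumes "left_ring_of_fractions B S Q \<phi>" and "S \<subseteq> {s. right_regular B s}"
    and "b \<in> carrier B" and "\<phi> b = \<zero>\<^bsub>Q\<^esub>"
  shows "b = \<zero>\<^bsub>B\<^esub>"
  using assms unfolding left_ring_of_fractions_def right_regular_def by blast

lemma right_ring_of_fractions_inj:
  assumes "right_ring_of_fractions B S Q \<phi>" and "S \<subseteq> {s. left_regular B s}"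
    and "b \<in> carrier B" and "\<phi> b = \<zero>\<^bsub>Q\<^esub>"
  shows "b = \<zero>\<^bsub>B\<^esub>"
  using assms unfolding right_ring_of_fractions_def left_regular_def by blast

lemma left_ring_of_fractions_preserves_left_regular:
  assumes "ring B" and frac: "left_ring_of_fractions B S Q \<phi>"
    and S_reg: "S \<subseteq> {s. right_regular B s}" and reg: "left_regular B x"
  shows "left_regular Q (\<phi> x)"
proof -
  from frac have "ring Q" and hom: "\<phi> \<in> ring_hom B Q" and units: "\<forall>s \<in> S. \<phi> s \<in> Units Q"
    and fraction: "\<forall>q \<in> carrier Q. \<exists>s \<in> S. \<exists>b \<in> carrier B. q = inv\<^bsub>Q\<^esub> (\<phi> s) \<otimes>\<^bsub>Q\<^esub> \<phi> b"
    unfolding left_ring_of_fractions_def by auto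
  interpret B: ring B by fact
  interpret Q: ring Q by fact
  have x: "x \<in> carrier B" using reg unfolding left_regular_def by blast
  show ?thesis
    unfolding left_regular_def
  proof (intro conjI ballI impI)
    show "\<phi> x \<in> carrier Q" using hom x by (rule ring_hom_closed)
    fix q assume q: "q \<in> carrier Q" "q \<otimes>\<^bsub>Q\<^esub> \<phi> x = \<zero>\<^bsub>Q\<^esub>"
    then obtain s b where s: "\<phi> s \<in> Units Q" and b: "b \<in> carrier B"
      and q_eq: "q = inv\<^bsub>Q\<^esub> (\<phi> s) \<otimes>\<^bsub>Q\<^esub> \<phi> b"
      using fraction units by blast
    have "\<phi> (b \<otimes>\<^bsub>B\<^esub> x) = \<phi> s \<otimes>\<^bsub>Q\<^esub> (q \<otimes>\<^bsub>Q\<^esub> \<phi> x)"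
      using s b x hom
      by (simp add: q_eq ring_hom_mult ring_hom_closed Q.m_assoc[symmetric]
          Q.Units_r_inv Q.Units_closed Q.Units_inv_closed)
    also have "\<dots> = \<zero>\<^bsub>Q\<^esub>" using q s by (simp add: Q.Units_closed)
    finally have "b \<otimes>\<^bsub>B\<^esub> x = \<zero>\<^bsub>B\<^esub>"
      using left_ring_of_fractions_inj[OF frac S_reg] b x by (simp add: B.m_closed)
    then have "b = \<zero>\<^bsub>B\<^esub>" using reg b unfolding left_regular_def by blast
    then show "q = \<zero>\<^bsub>Q\<^esub>"
      using q_eq s ring_hom_zero[OF hom \<open>ring B\<close> \<open>ring Q\<close>] by (simp add: Q.Units_inv_closed)
  qed
qed

lemma right_ring_of_fractions_preserves_right_regular:
  assumes "ring B" and frac: "right_ring_of_fractions B S Q \<phi>"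
    and S_reg: "S \<subseteq> {s. left_regular B s}" and reg: "right_regular B x"
  shows "right_regular Q (\<phi> x)"
proof -
  from frac have "ring Q" and hom: "\<phi> \<in> ring_hom B Q" and units: "\<forall>s \<in> S. \<phi> s \<in> Units Q"
    and fraction: "\<forall>q \<in> carrier Q. \<exists>s \<in> S. \<exists>b \<in> carrier B. q = \<phi> b \<otimes>\<^bsub>Q\<^esub> inv\<^bsub>Q\<^esub> (\<phi> s)"
    unfolding right_ring_of_fractions_def by auto
  interpret B: ring B by fact
  interpret Q: ring Q by fact
  have x: "x \<in> carrier B" using reg unfolding right_regular_def by blast
  show ?thesis
    unfolding right_regular_def
  proof (intro conjI ballI impI)
    show "\<phi> x \<in> carrier Q" using hom x by (rule ring_hom_closed)
    fix q assume q: "q \<in> carrier Q" "\<phi> x \<otimes>\<^bsub>Q\<^esub> q = \<zero>\<^bsub>Q\<^esub>"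
    then obtain s b where s: "\<phi> s \<in> Units Q" and b: "b \<in> carrier B"
      and q_eq: "q = \<phi> b \<otimes>\<^bsub>Q\<^esub> inv\<^bsub>Q\<^esub> (\<phi> s)"
      using fraction units by blast
    have "\<phi> (x \<otimes>\<^bsub>B\<^esub> b) = (\<phi> x \<otimes>\<^bsub>Q\<^esub> q) \<otimes>\<^bsub>Q\<^esub> \<phi> s"
      using s b x hom
      by (simp add: q_eq ring_hom_mult ring_hom_closed Q.m_assoc
          Q.Units_l_inv Q.Units_closed Q.Units_inv_closed)
    also have "\<dots> = \<zero>\<^bsub>Q\<^esub>" using q s by (simp add: Q.Units_closed)
    finally have "x \<otimes>\<^bsub>B\<^esub> b = \<zero>\<^bsub>B\<^esub>"
      using right_ring_of_fractions_inj[OF frac S_reg] b x by (simp add: B.m_closed)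
    then have "b = \<zero>\<^bsub>B\<^esub>" using reg b unfolding right_regular_def by blast
    then show "q = \<zero>\<^bsub>Q\<^esub>"
      using q_eq s ring_hom_zero[OF hom \<open>ring B\<close> \<open>ring Q\<close>] by (simp add: Q.Units_inv_closed)
  qed
qed

lemma left_ring_of_fractions_left_regular_imp_regular:
  assumes "ring B" and frac: "left_ring_of_fractions B S Q \<phi>"
    and S_reg: "S \<subseteq> {s. right_regular B s}"
    and Q_reg: "\<forall>y. left_regular Q y \<longrightarrow> regular Q y" and reg: "left_regular B x"
  shows "regular B x"
proof -
  have "right_regular Q (\<phi> x)"
    using Q_reg left_ring_of_fractions_preserves_left_regular[OF assms(1) frac S_reg reg]
    unfolding regular_def by blast
  then have "right_regular B x"
    using frac reg left_ring_of_fractions_inj[OF frac S_reg] \<open>ring B\<close>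
    by (intro ring_hom_inj_reflects_right_regular[of B Q \<phi>])
      (auto simp: left_ring_of_fractions_def left_regular_def)
  with reg show ?thesis unfolding regular_def by blast
qed

lemma right_ring_of_fractions_right_regular_imp_regular:
  assumes "ring B" and frac: "right_ring_of_fractions B S Q \<phi>"
    and S_reg: "S \<subseteq> {s. left_regular B s}"
    and Q_reg: "\<forall>y. right_regular Q y \<longrightarrow> regular Q y" and reg: "right_regular B x"
  shows "regular B x"
proof -
  have "left_regular Q (\<phi> x)"
    using Q_reg right_ring_of_fractions_preserves_right_regular[OF assms(1) frac S_reg reg]
    unfolding regular_def by blast
  then have "left_regular B x"
    using frac reg right_ring_of_fractions_inj[OF frac S_reg] \<open>ring B\<close>
    by (intro ring_hom_inj_reflects_left_regular[of B Q \<phi>])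
      (auto simp: right_ring_of_fractions_def right_regular_def)
  with reg show ?thesis unfolding regular_def by blast
qed

theorem proposition4p5:
  fixes B :: "('a, 'm) ring_scheme" and S :: "'a set"
    and Q :: "('b, 'n) ring_scheme" and \<phi> :: "'a \<Rightarrow> 'b"
  assumes "ring B"
    and "mult_subset B S"
    and "S \<subseteq> {x. regular B x}"
  shows "(left_ring_of_fractions B S Q \<phi> \<and> (\<forall>x. left_regular Q x \<longrightarrow> regular Q x)
            \<longrightarrow> (\<forall>x. left_regular B x \<longrightarrow> regular B x))
       \<and> (right_ring_of_fractions B S Q \<phi> \<and> (\<forall>x. right_regular Q x \<longrightarrow> regular Q x)
            \<longrightarrow> (\<forall>x. right_regular B x \<longrightarrow> regular B x))"
proof -
  have "S \<subseteq> {s. left_regular B s}" and "S \<subseteq> {s. right_regular B s}"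
    using assms(3) unfolding regular_def by auto
  then show ?thesis
    using left_ring_of_fractions_left_regular_imp_regular[OF assms(1)]
      right_ring_of_fractions_right_regular_imp_regular[OF assms(1)]
    by blast
qed

end
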